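(* Let $0<\alpha<1$ and define, for real $\xi,\eta$ with $\eta\neq0$, $\xi-\eta\neq 0$, $\xi\ne 0$, $$m(\xi-\eta,\eta)=\frac{\xi(1+|\xi-\eta|^\alpha)(1+|\eta|^\alpha)}{2\left[\xi(1+|\eta|^\alpha)(|\xi-\eta|^\alpha-|\xi|^\alpha)-\eta(1+|\xi|^\alpha)(|\xi-\eta|^\alpha-|\eta|^\alpha)\right]}.$$ Then, with implicit constants depending only on $\alpha$, $$\frac{|\xi-\eta|}{|\eta|}+\frac{|\eta|}{|\xi-\eta|}\lesssim|m(\xi-\eta,\eta)|\lesssim\frac{|\xi-\eta|^{1-\alpha}}{|\eta|}+\frac{|\eta|^{1-\alpha}}{|\xi-\eta|}\quad \text{for } (\xi-\eta)^2+\eta^2\leq 1,$$ and $$\frac{|\xi-\eta|^{1-\alpha}}{|\eta|}+\frac{|\eta|^{1-\alpha}}{|\xi-\eta|}\lesssim|m(\xi-\eta,\eta)|\lesssim \frac{|\xi-\eta|}{|\eta|}+\frac{|\eta|}{|\xi-\eta|}\quad \text{for } (\xi-\eta)^2+\eta^2\geq 1.$$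
   Context: $f\lesssim g$ means $f\le Cg$ for a constant $C$ independent of the variables. The function $m$ is regarded as a function of the two variables $(\xi-\eta,\eta)$. *)

theory Defs
  imports "HOL-Analysis.Analysis"
begin

definition m_mult :: "real \<Rightarrow> real \<Rightarrow> real \<Rightarrow> real" where
  "m_mult \<alpha> x y =
     (let \<xi> = x + y; \<eta> = y in
      \<xi> * (1 + \<bar>x\<bar> powr \<alpha>) * (1 + \<bar>\<eta>\<bar> powr \<alpha>) /
      (2 * (\<xi> * (1 + \<bar>\<eta>\<bar> powr \<alpha>) * (\<bar>x\<bar> powr \<alpha> - \<bar>\<xi>\<bar> powr \<alpha>)
            - \<eta> * (1 + \<bar>\<xi>\<bar> powr \<alpha>) * (\<bar>x\<bar> powr \<alpha> - \<bar>\<eta>\<bar> powr \<alpha>))))"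

end

theory Submission
  imports Defs
begin

(* Write x = xi - eta and y = eta, so that m = (x + y) (1 + |x|^a) (1 + |y|^a) / (2 D(x, y)).
   Since m is symmetric and D is odd, we may assume |y| <= x.  Of the three numbers x, y and
   -(x + y), which sum to zero, two have the same sign, and the identity D(x + y, -y) = -D(x, y)
   turns D into -D(U, V) for positive U, V.  For those, the tangent-line bound of the concave
   function t^a gives -D(U, V) ~ U V W^(a-1) (1 + W^a) with W = max U V, and W is within a
   factor two of x.  Hence |m| |y| ~ x^(1-a) (1 + |y|^a), which lies between x^(1-a) and
   x^(1-a) + x; the two regimes differ only in which of x^(1-a) and x dominates. *)

definition mult_den :: "real \<Rightarrow> real \<Rightarrow> real \<Rightarrow> real" where
  "mult_den a x y = x * (\<bar>x\<bar> powr a - \<bar>x + y\<bar> powr a) * (1 + \<bar>y\<bar> powr a)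
                  + y * (\<bar>y\<bar> powr a - \<bar>x + y\<bar> powr a) * (1 + \<bar>x\<bar> powr a)"

lemma m_mult_eq:
  "m_mult a x y = (x + y) * (1 + \<bar>x\<bar> powr a) * (1 + \<bar>y\<bar> powr a) / (2 * mult_den a x y)"
  unfolding m_mult_def mult_den_def Let_def by (simp add: algebra_simps)

lemma m_mult_commute: "m_mult a y x = m_mult a x y"
  unfolding m_mult_eq mult_den_def by (simp add: algebra_simps)

lemma mult_den_commute: "mult_den a y x = mult_den a x y"
  unfolding mult_den_def by (simp add: algebra_simps)

lemma mult_den_minus: "mult_den a (-x) (-y) = - mult_den a x y"
proof -
  have "\<bar>-x + -y\<bar> = \<bar>x + y\<bar>" by (metis abs_minus_cancel minus_add_distrib)
  then show ?thesis unfolding mult_den_def by (simp add: algebra_simps)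
qed

lemma mult_den_shift: "mult_den a (x + y) (-y) = - mult_den a x y"
  unfolding mult_den_def by (simp add: algebra_simps)

definition den_weight :: "real \<Rightarrow> real \<Rightarrow> real" where
  "den_weight a t = t powr (a - 1) * (1 + t powr a)"

lemma den_weight_pos: "0 < t \<Longrightarrow> 0 < den_weight a t"
  by (simp add: den_weight_def add_pos_pos)

lemma powr_le_tangent:
  fixes t a :: real
  assumes "0 < t" "0 \<le> a" "a \<le> 1"
  shows "t powr a \<le> 1 + a * (t - 1)"
  using Youngs_inequality_0[of a "1 - a" t 1] assms by (simp add: algebra_simps)

lemma powr_increment_le:
  fixes a U V :: real
  assumes "0 < U" "0 \<le> V" "0 \<le> a" "a \<le> 1"
  shows "U * ((U + V) powr a - U powr a) \<le> a * V * U powr a"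
proof -
  have "(U + V) powr a / U powr a \<le> 1 + a * ((U + V) / U - 1)"
    using powr_le_tangent[of "(U + V) / U" a] assms by (simp add: powr_divide)
  then show ?thesis
    using assms by (simp add: field_simps)
qed

lemma powr_increment_ge:
  fixes a U V :: real
  assumes "0 \<le> U" "0 < V" "0 \<le> a" "a \<le> 1"
  shows "a * U * (U + V) powr a \<le> (U + V) * ((U + V) powr a - V powr a)"
proof -
  have "V powr a / (U + V) powr a \<le> 1 + a * (V / (U + V) - 1)"
    using powr_le_tangent[of "V / (U + V)" a] assms by (simp add: powr_divide)
  then show ?thesis
    using assms by (simp add: field_simps)
qed

lemma mult_den_pos_ordered_bounds:
  fixes a U V :: real
  assumes a: "0 < a" "a < 1" and V: "0 < V" "V \<le> U"
  shows "a/2 * V * U powr a * (1 + U powr a) \<le> - mult_den a U V"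
    and "- mult_den a U V \<le> 3 * V * U powr a * (1 + U powr a)"
proof -
  define P Q R where "P = U powr a" and "Q = V powr a" and "R = (U + V) powr a"
  have U: "0 < U" using V by simp
  have pos: "0 < P" "0 < Q" "0 < R" using U V by (simp_all add: P_def Q_def R_def)
  have den: "- mult_den a U V = U * (R - P) * (1 + Q) + V * (R - Q) * (1 + P)"
    using U V unfolding mult_den_def P_def Q_def R_def by (simp add: algebra_simps)
  have QP: "Q \<le> P" and PR: "P \<le> R"
    unfolding P_def Q_def R_def using a V by (auto intro: powr_mono2)
  have "U * (R - P) \<le> a * V * P"
    using powr_increment_le[of U V a] U V a by (simp add: P_def R_def)
  also have "\<dots> \<le> V * P"
    using a V pos by simp
  finally have RP: "U * (R - P) \<le> V * P" .
  have "(U + V) * (a / 2 * R) = a * ((U + V) / 2) * R"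
    by simp
  also have "\<dots> \<le> a * U * R"
    using a V pos by (intro mult_right_mono mult_left_mono) auto
  also have "\<dots> \<le> (U + V) * (R - Q)"
    using powr_increment_ge[of U V a] U V a by (simp add: Q_def R_def)
  finally have RQ: "a / 2 * R \<le> R - Q"
    using mult_le_cancel_left_pos[of "U + V"] U V by simp
  have "V * P \<le> U * P"
    using V pos by (intro mult_right_mono) auto
  with RP have "U * (R - P) \<le> U * P"
    by linarith
  then have R2P: "R \<le> 2 * P"
    using mult_le_cancel_left_pos[OF U] by simp
  have "U * (R - P) * (1 + Q) \<le> V * P * (1 + P)"
    using mult_mono[OF RP, of "1 + Q" "1 + P"] QP V pos by simp
  moreover have "V * (R - Q) * (1 + P) \<le> V * (2 * P) * (1 + P)"
    using R2P V pos by (intro mult_right_mono mult_left_mono) auto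
  ultimately show "- mult_den a U V \<le> 3 * V * U powr a * (1 + U powr a)"
    unfolding den P_def[symmetric] by (simp add: algebra_simps)
  have "a/2 * V * P * (1 + P) \<le> V * (a / 2 * R) * (1 + P)"
    using PR a V pos by (simp add: mult_left_mono)
  also have "\<dots> \<le> V * (R - Q) * (1 + P)"
    using RQ V pos by (intro mult_right_mono mult_left_mono) auto
  also have "\<dots> \<le> - mult_den a U V"
    unfolding den using U PR pos by simp
  finally show "a/2 * V * U powr a * (1 + U powr a) \<le> - mult_den a U V"
    by (simp add: P_def)
qed

lemma mult_den_pos_bounds:
  fixes a U V :: real
  assumes a: "0 < a" "a < 1" and pos: "0 < U" "0 < V"
  defines "W \<equiv> max U V"
  shows "a/2 * (U * V) * den_weight a W \<le> - mult_den a U V"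
    and "- mult_den a U V \<le> 3 * (U * V) * den_weight a W"
proof -
  have ordered: "a/2 * (U * V) * den_weight a U \<le> - mult_den a U V \<and>
      - mult_den a U V \<le> 3 * (U * V) * den_weight a U"
    if "0 < V" "V \<le> U" for U V
  proof -
    have "U powr a = U * U powr (a - 1)"
      using that by (simp add: powr_mult_base)
    then show ?thesis
      using mult_den_pos_ordered_bounds[OF a that] by (simp add: den_weight_def algebra_simps)
  qed
  have "a/2 * (U * V) * den_weight a W \<le> - mult_den a U V \<and>
      - mult_den a U V \<le> 3 * (U * V) * den_weight a W"
  proof (cases "V \<le> U")
    case True
    then show ?thesis using ordered[of V U] pos by (simp add: W_def max_def)
  next
    case False
    then show ?thesis using ordered[of U V] pos
      by (simp add: W_def max_def mult_den_commute mult.commute)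
  qed
  then show "a/2 * (U * V) * den_weight a W \<le> - mult_den a U V"
    and "- mult_den a U V \<le> 3 * (U * V) * den_weight a W"
    by auto
qed

lemma den_weight_comparable:
  fixes a x W :: real
  assumes a: "0 < a" "a < 1" and W: "0 < W" "x / 2 \<le> W" "W \<le> x"
  shows "den_weight a x / 2 \<le> den_weight a W"
    and "den_weight a W \<le> 2 * den_weight a x"
proof -
  have x: "0 < x" using W by simp
  have "x powr (a - 1) \<le> W powr (a - 1)"
    using a W by (intro powr_mono2') auto
  moreover have "x powr a / 2 \<le> W powr a"
  proof -
    have "x powr a / 2 \<le> x powr a / 2 powr a"
      using a x by (intro divide_left_mono) (auto intro: powr_mono[of a 1 2, simplified])
    also have "\<dots> = (x / 2) powr a"
      using x by (simp add: powr_divide)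
    also have "\<dots> \<le> W powr a"
      using a W by (intro powr_mono2) auto
    finally show ?thesis .
  qed
  ultimately have "x powr (a - 1) * ((1 + x powr a) / 2) \<le> W powr (a - 1) * (1 + W powr a)"
    by (intro mult_mono) auto
  then show "den_weight a x / 2 \<le> den_weight a W"
    by (simp add: den_weight_def)
  have "W powr (a - 1) = W powr a / W" and "x powr (a - 1) = x powr a / x"
    using W x by (simp_all add: powr_diff)
  moreover have "W powr a / W \<le> x powr a / (x / 2)"
    using a W by (intro frac_le powr_mono2) auto
  ultimately have "W powr (a - 1) \<le> 2 * x powr (a - 1)"
    by (simp add: mult.commute)
  moreover have "1 + W powr a \<le> 1 + x powr a"
    using a W by (simp add: powr_mono2)
  ultimately have "W powr (a - 1) * (1 + W powr a) \<le> (2 * x powr (a - 1)) * (1 + x powr a)"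
    by (intro mult_mono) auto
  then show "den_weight a W \<le> 2 * den_weight a x"
    by (simp add: den_weight_def)
qed

lemma abs_mult_den_bounds_same_sign:
  fixes a x y :: real
  assumes a: "0 < a" "a < 1" and y: "0 < y" "y \<le> x"
  shows "a/4 * (\<bar>x + y\<bar> * \<bar>y\<bar>) * den_weight a x \<le> \<bar>mult_den a x y\<bar> \<and>
    \<bar>mult_den a x y\<bar> \<le> 6 * (\<bar>x + y\<bar> * \<bar>y\<bar>) * den_weight a x"
proof -
  define K g where "K = \<bar>x + y\<bar> * \<bar>y\<bar>" and "g = den_weight a x"
  have x: "0 < x" using y by simp
  have g: "0 < g" using x by (simp add: g_def den_weight_pos)
  have "max x y = x" using y by simp
  then have lower: "a/2 * (x * y) * g \<le> - mult_den a x y"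
    and upper: "- mult_den a x y \<le> 3 * (x * y) * g"
    using mult_den_pos_bounds[OF a x y(1)] by (simp_all add: g_def)
  have K: "x * y \<le> K" "K \<le> 2 * (x * y)"
    using x y by (simp_all add: K_def algebra_simps)
  have "a/4 * K * g \<le> a/4 * (2 * (x * y)) * g"
    using K a g by (intro mult_right_mono mult_left_mono) auto
  also have "\<dots> = a/2 * (x * y) * g" by simp
  also have "\<dots> \<le> \<bar>mult_den a x y\<bar>" using lower by linarith
  finally have "a/4 * K * g \<le> \<bar>mult_den a x y\<bar>" .
  moreover have "0 < a/2 * (x * y) * g"
    using a x y g by simp
  then have "\<bar>mult_den a x y\<bar> \<le> 3 * (x * y) * g"
    using lower upper by linarith
  moreover have "3 * (x * y) * g \<le> 6 * K * g"
    using K g x y by (intro mult_right_mono) auto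
  ultimately have "a/4 * K * g \<le> \<bar>mult_den a x y\<bar> \<and> \<bar>mult_den a x y\<bar> \<le> 6 * K * g"
    by linarith
  then show ?thesis by (simp only: K_def g_def)
qed

lemma abs_mult_den_bounds_opposite_sign:
  fixes a x y :: real
  assumes a: "0 < a" "a < 1" and y: "y < 0" "0 < x + y"
  shows "a/4 * (\<bar>x + y\<bar> * \<bar>y\<bar>) * den_weight a x \<le> \<bar>mult_den a x y\<bar> \<and>
    \<bar>mult_den a x y\<bar> \<le> 6 * (\<bar>x + y\<bar> * \<bar>y\<bar>) * den_weight a x"
proof -
  define \<xi> s where "\<xi> = x + y" and "s = - y"
  define g W where "g = den_weight a x" and "W = den_weight a (max \<xi> s)"
  have pos: "0 < \<xi>" "0 < s" and x: "x = \<xi> + s" "0 < x"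
    using y by (auto simp: \<xi>_def s_def)
  have "x / 2 \<le> max \<xi> s" "max \<xi> s \<le> x" "0 < max \<xi> s"
    using pos x by auto
  from den_weight_comparable[OF a this(3,1,2)]
  have gW: "g / 2 \<le> W" "W \<le> 2 * g" by (simp_all add: g_def W_def)
  have "mult_den a x y = - mult_den a \<xi> s"
    using mult_den_shift[of a x y] by (simp add: \<xi>_def s_def)
  then have lower: "a/2 * (\<xi> * s) * W \<le> mult_den a x y"
    and upper: "mult_den a x y \<le> 3 * (\<xi> * s) * W"
    using mult_den_pos_bounds[OF a pos] by (simp_all add: W_def)
  have K: "\<bar>x + y\<bar> * \<bar>y\<bar> = \<xi> * s" and K0: "0 < \<xi> * s"
    using pos by (simp_all add: \<xi>_def s_def mult_pos_neg)
  have "a/4 * (\<xi> * s) * g = a/2 * (\<xi> * s) * (g / 2)" by simp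
  also have "\<dots> \<le> a/2 * (\<xi> * s) * W"
    using gW a K0 by (intro mult_left_mono) auto
  also have "\<dots> \<le> \<bar>mult_den a x y\<bar>" using lower by linarith
  finally have "a/4 * (\<xi> * s) * g \<le> \<bar>mult_den a x y\<bar>" .
  moreover have "0 < W"
    using gW den_weight_pos[OF x(2), of a] by (simp add: g_def)
  then have "0 < a/2 * (\<xi> * s) * W"
    using a K0 by simp
  then have "\<bar>mult_den a x y\<bar> \<le> 3 * (\<xi> * s) * W"
    using lower upper by linarith
  moreover have "3 * (\<xi> * s) * W \<le> 3 * (\<xi> * s) * (2 * g)"
    using gW K0 by (intro mult_left_mono) auto
  ultimately have "a/4 * (\<xi> * s) * g \<le> \<bar>mult_den a x y\<bar> \<and> \<bar>mult_den a x y\<bar> \<le> 6 * (\<xi> * s) * g"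
    by linarith
  then show ?thesis by (simp only: K g_def)
qed

lemma abs_mult_den_bounds_pos:
  fixes a x y :: real
  assumes a: "0 < a" "a < 1" and y: "y \<noteq> 0" "\<bar>y\<bar> \<le> x" and xy: "x + y \<noteq> 0"
  shows "a/4 * (\<bar>x + y\<bar> * \<bar>y\<bar>) * den_weight a x \<le> \<bar>mult_den a x y\<bar> \<and>
    \<bar>mult_den a x y\<bar> \<le> 6 * (\<bar>x + y\<bar> * \<bar>y\<bar>) * den_weight a x"
proof (cases "0 < y")
  case True
  then show ?thesis using abs_mult_den_bounds_same_sign[OF a True] y by simp
next
  case False
  then show ?thesis using abs_mult_den_bounds_opposite_sign[OF a] y xy by simp
qed

lemma abs_mult_den_bounds:
  fixes a x y :: real
  assumes a: "0 < a" "a < 1" and y: "y \<noteq> 0" "\<bar>y\<bar> \<le> \<bar>x\<bar>" and xy: "x + y \<noteq> 0"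
  shows "a/4 * (\<bar>x + y\<bar> * \<bar>y\<bar>) * den_weight a \<bar>x\<bar> \<le> \<bar>mult_den a x y\<bar> \<and>
    \<bar>mult_den a x y\<bar> \<le> 6 * (\<bar>x + y\<bar> * \<bar>y\<bar>) * den_weight a \<bar>x\<bar>"
proof (cases "0 < x")
  case True
  then show ?thesis using abs_mult_den_bounds_pos[OF a y(1)] y xy by simp
next
  case False
  then have "0 < - x" using y by auto
  moreover have "\<bar>-x + -y\<bar> = \<bar>x + y\<bar>"
    by (metis abs_minus_cancel minus_add_distrib)
  ultimately show ?thesis
    using abs_mult_den_bounds_pos[OF a, of "-y" "-x"] y xy False
    by (simp add: mult_den_minus)
qed

lemma abs_m_mult_bounds:
  fixes a x y :: real
  assumes a: "0 < a" "a < 1" and y: "y \<noteq> 0" "\<bar>y\<bar> \<le> \<bar>x\<bar>" and xy: "x + y \<noteq> 0"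
  shows "\<bar>x\<bar> powr (1 - a) / (12 * \<bar>y\<bar>) \<le> \<bar>m_mult a x y\<bar>"
    and "\<bar>m_mult a x y\<bar> \<le> 2/a * (\<bar>x\<bar> powr (1 - a) + \<bar>x\<bar>) / \<bar>y\<bar>"
proof -
  define T p q k where "T = \<bar>x\<bar>" and "p = T powr a" and "q = \<bar>y\<bar> powr a"
    and "k = T powr (1 - a)"
  define K g D where "K = \<bar>x + y\<bar> * \<bar>y\<bar>" and "g = den_weight a T"
    and "D = \<bar>mult_den a x y\<bar>"
  have T: "0 < T" using y by (auto simp: T_def)
  have Kg: "0 < K * g"
    using y xy T by (simp add: K_def g_def den_weight_pos)
  have D: "a/4 * (K * g) \<le> D" "D \<le> 6 * (K * g)"
    using abs_mult_den_bounds[OF a y xy] by (simp_all add: K_def g_def D_def T_def mult.assoc)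
  moreover have "0 < a/4 * (K * g)" using a Kg by simp
  ultimately have D0: "0 < D" by linarith
  have ratio: "1/12 \<le> K * g / (2 * D)" "K * g / (2 * D) \<le> 2/a"
    using D D0 a by (simp_all add: field_simps)
  have kg: "k * g = 1 + p"
    using T by (simp add: k_def g_def p_def den_weight_def flip: powr_add)
  have kp: "k * p = T"
    using T by (simp add: k_def p_def flip: powr_add)
  have "\<bar>m_mult a x y\<bar> * \<bar>y\<bar> = K * (1 + p) * (1 + q) / (2 * D)"
    unfolding m_mult_eq using T
    by (simp add: K_def D_def T_def p_def q_def abs_mult add_pos_pos abs_divide)
  also have "\<dots> = k * (1 + q) * (K * g / (2 * D))"
    unfolding kg[symmetric] by simp
  finally have m: "\<bar>m_mult a x y\<bar> * \<bar>y\<bar> = k * (1 + q) * (K * g / (2 * D))" .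
  have k: "0 < k" and q: "0 \<le> q" and Y: "0 < \<bar>y\<bar>" using T y by (simp_all add: k_def q_def)
  have "k * 1 * (1/12) \<le> k * (1 + q) * (K * g / (2 * D))"
    using ratio k q by (intro mult_mono) auto
  then have "k \<le> \<bar>m_mult a x y\<bar> * (12 * \<bar>y\<bar>)"
    unfolding m[symmetric] by simp
  then show "\<bar>x\<bar> powr (1 - a) / (12 * \<bar>y\<bar>) \<le> \<bar>m_mult a x y\<bar>"
    using Y by (subst pos_divide_le_eq) (auto simp: k_def T_def)
  have "q \<le> p"
    using y by (simp add: q_def p_def T_def a powr_mono2 less_imp_le)
  then have "k * (1 + q) * (K * g / (2 * D)) \<le> k * (1 + p) * (2/a)"
    using ratio k q by (intro mult_mono) auto
  also have "\<dots> = 2/a * (k + T)"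
    using kp by (simp add: algebra_simps)
  finally show "\<bar>m_mult a x y\<bar> \<le> 2/a * (\<bar>x\<bar> powr (1 - a) + \<bar>x\<bar>) / \<bar>y\<bar>"
    using Y by (subst pos_le_divide_eq) (auto simp: m k_def T_def)
qed

lemma small_regime_bounds:
  fixes a T Y M :: real
  assumes a: "0 < a" "a < 1" and Y: "0 < Y" "Y \<le> T" and T: "T \<le> 1"
    and lower: "T powr (1 - a) / (12 * Y) \<le> M"
    and upper: "M \<le> 2/a * (T powr (1 - a) + T) / Y"
  shows "T / Y + Y / T \<le> 24/a * M"
    and "M \<le> 24/a * (T powr (1 - a) / Y + Y powr (1 - a) / T)"
proof -
  define k where "k = T powr (1 - a)"
  have T0: "0 < T" using Y by simp
  have Tk: "T \<le> k"
    using powr_mono'[of "1 - a" 1 T] a T0 T by (simp add: k_def)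
  have "Y / T \<le> 1" "1 \<le> T / Y" "T / Y \<le> k / Y"
    using Y T0 Tk by (simp_all add: divide_right_mono)
  then have "T / Y + Y / T \<le> 2 * (k / Y)"
    by linarith
  also have "\<dots> \<le> 24 * M"
    using lower by (simp add: k_def)
  also have "\<dots> \<le> 24/a * M"
  proof (rule mult_right_mono)
    show "24 \<le> 24/a" using a by (simp add: field_simps)
    have "0 < k / (12 * Y)" using T0 Tk Y by simp
    then show "0 \<le> M" using lower by (simp add: k_def)
  qed
  finally show "T / Y + Y / T \<le> 24/a * M" .
  have "M \<le> 2/a * (k + T) / Y"
    using upper by (simp add: k_def)
  also have "\<dots> \<le> 4/a * (k / Y)"
    using a Y Tk by (simp add: field_simps)
  also have "\<dots> \<le> 24/a * (k / Y + Y powr (1 - a) / T)"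
    using a Y T0 Tk by (simp add: field_simps)
  finally show "M \<le> 24/a * (T powr (1 - a) / Y + Y powr (1 - a) / T)"
    by (simp add: k_def)
qed

lemma large_regime_bounds:
  fixes a T Y M :: real
  assumes a: "0 < a" "a < 1" and Y: "0 < Y" "Y \<le> T" and T: "1/2 \<le> T"
    and lower: "T powr (1 - a) / (12 * Y) \<le> M"
    and upper: "M \<le> 2/a * (T powr (1 - a) + T) / Y"
  shows "T powr (1 - a) / Y + Y powr (1 - a) / T \<le> 24/a * M"
    and "M \<le> 24/a * (T / Y + Y / T)"
proof -
  define k where "k = T powr (1 - a)"
  have T0: "0 < T" using Y by simp
  have k0: "0 < k" using T0 by (simp add: k_def)
  have "1/2 \<le> (1/2 :: real) powr a"
    using powr_mono'[of a 1 "1/2 :: real"] a by simp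
  also have "\<dots> \<le> T powr a"
    using a T by (intro powr_mono2) auto
  finally have "k \<le> 2 * T"
    using T0 by (simp add: k_def powr_diff field_simps)
  have "Y powr (1 - a) \<le> k"
    using a Y by (simp add: k_def powr_mono2)
  then have "Y powr (1 - a) / T \<le> k / Y"
    using Y k0 by (intro frac_le) auto
  then have "k / Y + Y powr (1 - a) / T \<le> 2 * (k / Y)"
    by linarith
  also have "\<dots> \<le> 24 * M"
    using lower by (simp add: k_def)
  also have "\<dots> \<le> 24/a * M"
  proof (rule mult_right_mono)
    show "24 \<le> 24/a" using a by (simp add: field_simps)
    have "0 < k / (12 * Y)" using k0 Y by simp
    then show "0 \<le> M" using lower by (simp add: k_def)
  qed
  finally show "T powr (1 - a) / Y + Y powr (1 - a) / T \<le> 24/a * M"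
    by (simp add: k_def)
  have "M \<le> 2/a * (k + T) / Y"
    using upper by (simp add: k_def)
  also have "\<dots> \<le> 6/a * (T / Y)"
    using a Y \<open>k \<le> 2 * T\<close> by (simp add: field_simps)
  also have "\<dots> \<le> 24/a * (T / Y + Y / T)"
    using a Y T0 by (simp add: field_simps)
  finally show "M \<le> 24/a * (T / Y + Y / T)" .
qed

definition ratio_sum :: "real \<Rightarrow> real \<Rightarrow> real" where
  "ratio_sum x y = \<bar>x\<bar> / \<bar>y\<bar> + \<bar>y\<bar> / \<bar>x\<bar>"

definition ratio_sum_powr :: "real \<Rightarrow> real \<Rightarrow> real \<Rightarrow> real" where
  "ratio_sum_powr a x y = \<bar>x\<bar> powr (1 - a) / \<bar>y\<bar> + \<bar>y\<bar> powr (1 - a) / \<bar>x\<bar>"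

lemma ratio_sum_commute: "ratio_sum y x = ratio_sum x y"
  by (simp add: ratio_sum_def)

lemma ratio_sum_powr_commute: "ratio_sum_powr a y x = ratio_sum_powr a x y"
  by (simp add: ratio_sum_powr_def)

lemma m_mult_regime_bounds_ordered:
  fixes a x y :: real
  assumes a: "0 < a" "a < 1" and y: "y \<noteq> 0" "\<bar>y\<bar> \<le> \<bar>x\<bar>" and xy: "x + y \<noteq> 0"
  shows "(x\<^sup>2 + y\<^sup>2 \<le> 1 \<longrightarrow>
      ratio_sum x y \<le> 24/a * \<bar>m_mult a x y\<bar> \<and> \<bar>m_mult a x y\<bar> \<le> 24/a * ratio_sum_powr a x y) \<and>
    (1 \<le> x\<^sup>2 + y\<^sup>2 \<longrightarrow>
      ratio_sum_powr a x y \<le> 24/a * \<bar>m_mult a x y\<bar> \<and> \<bar>m_mult a x y\<bar> \<le> 24/a * ratio_sum x y)"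
proof -
  define T Y M where "T = \<bar>x\<bar>" and "Y = \<bar>y\<bar>" and "M = \<bar>m_mult a x y\<bar>"
  have Y: "0 < Y" "Y \<le> T" using y by (simp_all add: T_def Y_def)
  have bounds: "T powr (1 - a) / (12 * Y) \<le> M" "M \<le> 2/a * (T powr (1 - a) + T) / Y"
    using abs_m_mult_bounds[OF a y xy] by (simp_all add: T_def Y_def M_def)
  have "T \<le> 1" if "x\<^sup>2 + y\<^sup>2 \<le> 1"
  proof -
    have "x\<^sup>2 \<le> 1" using that zero_le_power2[of y] by linarith
    then show ?thesis by (simp add: T_def abs_square_le_1)
  qed
  moreover have "1/2 \<le> T" if "1 \<le> x\<^sup>2 + y\<^sup>2"
  proof -
    have "y\<^sup>2 \<le> x\<^sup>2" using y by (simp add: abs_le_square_iff)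
    then have "(1/2)\<^sup>2 \<le> x\<^sup>2" using that by (simp add: power2_eq_square)
    then show ?thesis by (simp add: T_def abs_le_square_iff[symmetric])
  qed
  ultimately show ?thesis
    using small_regime_bounds[OF a Y _ bounds] large_regime_bounds[OF a Y _ bounds]
    by (simp add: T_def Y_def M_def ratio_sum_def ratio_sum_powr_def)
qed

lemma m_mult_regime_bounds:
  fixes a x y :: real
  assumes a: "0 < a" "a < 1" and nz: "x \<noteq> 0" "y \<noteq> 0" "x + y \<noteq> 0"
  shows "(x\<^sup>2 + y\<^sup>2 \<le> 1 \<longrightarrow>
      ratio_sum x y \<le> 24/a * \<bar>m_mult a x y\<bar> \<and> \<bar>m_mult a x y\<bar> \<le> 24/a * ratio_sum_powr a x y) \<and>
    (1 \<le> x\<^sup>2 + y\<^sup>2 \<longrightarrow>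
      ratio_sum_powr a x y \<le> 24/a * \<bar>m_mult a x y\<bar> \<and> \<bar>m_mult a x y\<bar> \<le> 24/a * ratio_sum x y)"
proof (cases "\<bar>y\<bar> \<le> \<bar>x\<bar>")
  case True
  then show ?thesis by (rule m_mult_regime_bounds_ordered[OF a nz(2) _ nz(3)])
next
  case False
  then have "\<bar>x\<bar> \<le> \<bar>y\<bar>" by simp
  from m_mult_regime_bounds_ordered[OF a nz(1) this] nz(3) show ?thesis
    by (simp add: m_mult_commute ratio_sum_commute ratio_sum_powr_commute add.commute)
qed

theorem proposition2p1:
  fixes \<alpha> :: real
  assumes "0 < \<alpha>" and "\<alpha> < 1"
  shows "\<exists>C>0. \<forall>\<xi> \<eta> :: real. \<eta> \<noteq> 0 \<longrightarrow> \<xi> - \<eta> \<noteq> 0 \<longrightarrow> \<xi> \<noteq> 0 \<longrightarrow>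
    ((\<xi> - \<eta>)\<^sup>2 + \<eta>\<^sup>2 \<le> 1 \<longrightarrow>
       \<bar>\<xi> - \<eta>\<bar> / \<bar>\<eta>\<bar> + \<bar>\<eta>\<bar> / \<bar>\<xi> - \<eta>\<bar> \<le> C * \<bar>m_mult \<alpha> (\<xi> - \<eta>) \<eta>\<bar> \<and>
       \<bar>m_mult \<alpha> (\<xi> - \<eta>) \<eta>\<bar> \<le>
         C * (\<bar>\<xi> - \<eta>\<bar> powr (1 - \<alpha>) / \<bar>\<eta>\<bar> + \<bar>\<eta>\<bar> powr (1 - \<alpha>) / \<bar>\<xi> - \<eta>\<bar>)) \<and>
    ((\<xi> - \<eta>)\<^sup>2 + \<eta>\<^sup>2 \<ge> 1 \<longrightarrow>
       \<bar>\<xi> - \<eta>\<bar> powr (1 - \<alpha>) / \<bar>\<eta>\<bar> + \<bar>\<eta>\<bar> powr (1 - \<alpha>) / \<bar>\<xi> - \<eta>\<bar>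
         \<le> C * \<bar>m_mult \<alpha> (\<xi> - \<eta>) \<eta>\<bar> \<and>
       \<bar>m_mult \<alpha> (\<xi> - \<eta>) \<eta>\<bar> \<le> C * (\<bar>\<xi> - \<eta>\<bar> / \<bar>\<eta>\<bar> + \<bar>\<eta>\<bar> / \<bar>\<xi> - \<eta>\<bar>))"
proof -
  have "0 < 24/\<alpha>" using assms by simp
  with m_mult_regime_bounds[OF assms] show ?thesis
    unfolding ratio_sum_def ratio_sum_powr_def by (metis diff_add_cancel)
qed

end
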